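(* Let $G$ be a group with the unique root property. Suppose that for infinitely many primes $p$ there exists a subgroup $H$ of index $p$ in $G$ which is isomorphic to $G$. Then the abstract commensurator $\mathrm{Comm}(G)$ is not finitely generated.
   Context: A group $G$ has the unique root property if for all $x,y\in G$ and every positive integer $n$, $x^n=y^n$ implies $x=y$. The abstract commensurator $\mathrm{Comm}(G)$ is the group of equivalence classes of isomorphisms between finite-index subgroups of $G$, two such isomorphisms being equivalent if they agree on some finite-index subgroup of $G$ on which both are defined; the product of $\alpha:G_1\to G_1'$ and $\beta:G_2\to G_2'$ is $\alpha\beta:\alpha^{-1}(G_1'\cap G_2)\to\beta(G_1'\cap G_2)$. *)

theory Defs
  imports "HOL-Algebra.Algebra" "HOL-Computational_Algebra.Primes"
begin

definition unique_root :: "('a, 'b) monoid_scheme \<Rightarrow> bool" where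
  "unique_root G \<longleftrightarrow> (\<forall>x\<in>carrier G. \<forall>y\<in>carrier G. \<forall>n::nat. n > 0 \<longrightarrow>
      x [^]\<^bsub>G\<^esub> n = y [^]\<^bsub>G\<^esub> n \<longrightarrow> x = y)"

definition fin_index :: "('a, 'b) monoid_scheme \<Rightarrow> 'a set \<Rightarrow> bool" where
  "fin_index G H \<longleftrightarrow> subgroup H G \<and> finite (rcosets\<^bsub>G\<^esub> H)"

definition partial_isos :: "('a, 'b) monoid_scheme \<Rightarrow> ('a set \<times> ('a \<Rightarrow> 'a)) set" where
  "partial_isos G = {(A, f). fin_index G A \<and> fin_index G (f ` A) \<and>
      f \<in> iso (G\<lparr>carrier := A\<rparr>) (G\<lparr>carrier := f ` A\<rparr>)}"

definition comm_equiv :: "('a, 'b) monoid_scheme \<Rightarrow>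
    ((('a set \<times> ('a \<Rightarrow> 'a))) \<times> ('a set \<times> ('a \<Rightarrow> 'a))) set" where
  "comm_equiv G = {(x, y). x \<in> partial_isos G \<and> y \<in> partial_isos G \<and>
      (\<exists>K. fin_index G K \<and> K \<subseteq> fst x \<and> K \<subseteq> fst y \<and> (\<forall>k\<in>K. snd x k = snd y k))}"

definition pcomp :: "('a set \<times> ('a \<Rightarrow> 'a)) \<Rightarrow> ('a set \<times> ('a \<Rightarrow> 'a)) \<Rightarrow> ('a set \<times> ('a \<Rightarrow> 'a))" where
  "pcomp x y = ({a \<in> fst x. snd x a \<in> fst y}, snd y \<circ> snd x)"

definition comm_mult :: "('a, 'b) monoid_scheme \<Rightarrow> ('a set \<times> ('a \<Rightarrow> 'a)) set \<Rightarrow>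
    ('a set \<times> ('a \<Rightarrow> 'a)) set \<Rightarrow> ('a set \<times> ('a \<Rightarrow> 'a)) set" where
  "comm_mult G U V = comm_equiv G `` {pcomp (SOME x. x \<in> U) (SOME y. y \<in> V)}"

definition Comm :: "('a, 'b) monoid_scheme \<Rightarrow> ('a set \<times> ('a \<Rightarrow> 'a)) set monoid" where
  "Comm G = \<lparr> carrier = partial_isos G // comm_equiv G,
              monoid.mult = comm_mult G,
              monoid.one = comm_equiv G `` {(carrier G, id)} \<rparr>"

definition finitely_generated :: "('a, 'b) monoid_scheme \<Rightarrow> bool" where
  "finitely_generated G \<longleftrightarrow> (\<exists>S. finite S \<and> S \<subseteq> carrier G \<and> generate G S = carrier G)"

end

theory Submission
  imports Defs
begin

text \<open>
  A commensuration \<open>\<alpha> : A \<rightarrow> B\<close> of \<open>G\<close> has an index ratio \<open>[G:A] / [G:B]\<close>. Since indices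
  are multiplicative along chains of finite-index subgroups and injective homomorphisms
  preserve relative indices, this ratio does not change when \<open>\<alpha>\<close> is restricted, and it is
  multiplicative under composition; hence for every prime \<open>p\<close> its \<open>p\<close>-adic valuation is a
  homomorphism \<open>Comm(G) \<rightarrow> \<int>\<close>. Finitely many generators involve only finitely many primes
  in their index ratios, so all but finitely many of these homomorphisms vanish on a finitely
  generated \<open>Comm(G)\<close>. But an isomorphism from a subgroup of prime index \<open>p\<close> onto \<open>G\<close> is a
  commensuration with index ratio \<open>p\<close>.
\<close>

section \<open>Indices of subgroups\<close>

lemma bij_betw_images_same_fibres:
  assumes "\<And>x y. x \<in> S \<Longrightarrow> y \<in> S \<Longrightarrow> g x = g y \<longleftrightarrow> F x = F y"
  shows "bij_betw (\<lambda>z. F (inv_into S g z)) (g ` S) (F ` S)"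
proof -
  have F_inv: "F (inv_into S g (g x)) = F x" if "x \<in> S" for x
    using assms[of "inv_into S g (g x)" x] that by (simp add: inv_into_into f_inv_into_f)
  show ?thesis
    unfolding bij_betw_def
  proof
    show "inj_on (\<lambda>z. F (inv_into S g z)) (g ` S)"
      by (auto simp: inj_on_def F_inv assms)
    show "(\<lambda>z. F (inv_into S g z)) ` g ` S = F ` S"
      by (force simp: image_image F_inv)
  qed
qed

definition rcos_rep :: "('a, 'b) monoid_scheme \<Rightarrow> 'a set \<Rightarrow> 'a \<Rightarrow> 'a" where
  "rcos_rep G H x = (SOME a. a \<in> carrier G \<and> H #>\<^bsub>G\<^esub> a = H #>\<^bsub>G\<^esub> x)"

context group begin

lemma rcos_eq_rcos_iff:
  assumes "subgroup H G" "x \<in> carrier G" "y \<in> carrier G"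
  shows "H #> x = H #> y \<longleftrightarrow> x \<otimes> inv y \<in> H"
proof
  assume "H #> x = H #> y"
  then have "x \<in> H #> y" using rcos_self[OF assms(2,1)] by simp
  then show "x \<otimes> inv y \<in> H" using subgroup.rcos_module_imp[OF assms(1) is_group assms(3)] by blast
next
  assume "x \<otimes> inv y \<in> H"
  then have "x \<in> H #> y" using subgroup.rcos_module_rev[OF assms(1) is_group assms(3,2)] by blast
  then show "H #> x = H #> y" using repr_independence[OF _ assms(3,1)] by metis
qed

lemma rcosets_eq_image: "rcosets H = (\<lambda>x. H #> x) ` carrier G"
  by (auto simp: RCOSETS_def)

lemma rcosets_subgroup_eq_image: "rcosets\<^bsub>G\<lparr>carrier := A\<rparr>\<^esub> H = (\<lambda>x. H #> x) ` A"
  by (auto simp: RCOSETS_def r_coset_def)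

lemma
  assumes "subgroup H G"
    and "\<And>x y. x \<in> carrier G \<Longrightarrow> y \<in> carrier G \<Longrightarrow> x \<otimes> inv y \<in> H \<longleftrightarrow> F x = F y"
  shows card_rcosets_eq_card_image: "card (rcosets H) = card (F ` carrier G)"
    and finite_rcosets_iff_finite_image: "finite (rcosets H) \<longleftrightarrow> finite (F ` carrier G)"
proof -
  have "bij_betw (\<lambda>z. F (inv_into (carrier G) (\<lambda>x. H #> x) z)) (rcosets H) (F ` carrier G)"
    unfolding rcosets_eq_image
    by (rule bij_betw_images_same_fibres) (simp add: rcos_eq_rcos_iff assms)
  then show "card (rcosets H) = card (F ` carrier G)" "finite (rcosets H) \<longleftrightarrow> finite (F ` carrier G)"
    by (auto simp: bij_betw_same_card bij_betw_finite)
qed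

lemma
  assumes "subgroup H G" "x \<in> carrier G"
  shows rcos_rep_closed: "rcos_rep G H x \<in> carrier G"
    and rcos_rep_mult_inv_mem: "x \<otimes> inv rcos_rep G H x \<in> H"
proof -
  have "rcos_rep G H x \<in> carrier G \<and> H #> rcos_rep G H x = H #> x"
    unfolding rcos_rep_def by (rule someI[of _ x]) (use assms in auto)
  then show "rcos_rep G H x \<in> carrier G" "x \<otimes> inv rcos_rep G H x \<in> H"
    using rcos_eq_rcos_iff[OF assms(1) assms(2)] by auto
qed

lemma rcos_rep_eq:
  assumes "subgroup H G" "x \<in> carrier G" "y \<in> carrier G" "x \<otimes> inv y \<in> H"
  shows "rcos_rep G H x = rcos_rep G H y"
  using rcos_eq_rcos_iff[OF assms(1-3)] assms(4) by (simp add: rcos_rep_def)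

context
  fixes H K
  assumes H: "subgroup H G" and K: "subgroup K G" and "K \<subseteq> H"
begin

private abbreviation rcos_pair :: "'a \<Rightarrow> 'a set \<times> 'a set" where
  "rcos_pair x \<equiv> (H #> x, K #> (x \<otimes> inv rcos_rep G H x))"

lemma rcos_pair_eq_iff:
  assumes xy: "x \<in> carrier G" "y \<in> carrier G"
  shows "x \<otimes> inv y \<in> K \<longleftrightarrow> rcos_pair x = rcos_pair y"
proof -
  have shift: "(x \<otimes> inv a) \<otimes> inv (y \<otimes> inv a) = x \<otimes> inv y" if "a \<in> carrier G" for a
    using xy that by (simp add: inv_mult_group m_assoc) (simp add: m_assoc [symmetric])
  have "rcos_rep G H x = rcos_rep G H y" if "x \<otimes> inv y \<in> H"
    by (rule rcos_rep_eq[OF H xy that])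
  then show ?thesis
    using rcos_eq_rcos_iff[OF H xy] \<open>K \<subseteq> H\<close> shift rcos_rep_closed[OF H xy(1)]
      rcos_eq_rcos_iff[OF K, of "x \<otimes> inv rcos_rep G H x" "y \<otimes> inv rcos_rep G H x"] xy
    by auto
qed

lemma rcos_pair_image: "rcos_pair ` carrier G = (rcosets H) \<times> (rcosets\<^bsub>G\<lparr>carrier := H\<rparr>\<^esub> K)"
proof
  show "rcos_pair ` carrier G \<subseteq> (rcosets H) \<times> (rcosets\<^bsub>G\<lparr>carrier := H\<rparr>\<^esub> K)"
    using rcos_rep_closed[OF H] rcos_rep_mult_inv_mem[OF H]
    by (auto simp: rcosets_eq_image rcosets_subgroup_eq_image)
  show "(rcosets H) \<times> (rcosets\<^bsub>G\<lparr>carrier := H\<rparr>\<^esub> K) \<subseteq> rcos_pair ` carrier G"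
  proof (clarsimp simp: rcosets_eq_image rcosets_subgroup_eq_image)
    fix x h assume x: "x \<in> carrier G" and h: "h \<in> H"
    define a where "a = rcos_rep G H x"
    have hc: "h \<in> carrier G" and a: "a \<in> carrier G"
      using h subgroup.subset[OF H] rcos_rep_closed[OF H x] by (auto simp: a_def)
    have "inv (x \<otimes> inv a) \<in> H"
      using rcos_rep_mult_inv_mem[OF H x] subgroup.m_inv_closed[OF H] by (simp add: a_def)
    then have "h \<otimes> inv (x \<otimes> inv a) \<in> H"
      using h subgroup.m_closed[OF H] by simp
    moreover have "(h \<otimes> a) \<otimes> inv x = h \<otimes> inv (x \<otimes> inv a)"
      using hc a x by (simp add: m_assoc inv_mult_group)
    ultimately have ha_x: "(h \<otimes> a) \<otimes> inv x \<in> H" by simp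
    moreover have "rcos_rep G H (h \<otimes> a) = a"
      using rcos_rep_eq[OF H m_closed[OF hc a] x ha_x] by (simp add: a_def)
    ultimately have "(H #> x, K #> h) = rcos_pair (h \<otimes> a)"
      using rcos_eq_rcos_iff[OF H m_closed[OF hc a] x] hc a by (simp add: m_assoc)
    then show "(H #> x, K #> h) \<in> rcos_pair ` carrier G"
      using m_closed[OF hc a] by (rule image_eqI)
  qed
qed

lemma
  shows card_rcosets_mult:
      "card (rcosets K) = card (rcosets H) * card (rcosets\<^bsub>G\<lparr>carrier := H\<rparr>\<^esub> K)"
    and finite_rcosets_mult:
      "finite (rcosets K) \<longleftrightarrow> finite (rcosets H) \<and> finite (rcosets\<^bsub>G\<lparr>carrier := H\<rparr>\<^esub> K)"
proof -
  have "rcosets H \<noteq> {}" by (auto simp: rcosets_eq_image)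
  moreover have "rcosets\<^bsub>G\<lparr>carrier := H\<rparr>\<^esub> K \<noteq> {}"
    using subgroup.one_closed[OF H] by (auto simp: rcosets_subgroup_eq_image)
  ultimately show
    "card (rcosets K) = card (rcosets H) * card (rcosets\<^bsub>G\<lparr>carrier := H\<rparr>\<^esub> K)"
    "finite (rcosets K) \<longleftrightarrow> finite (rcosets H) \<and> finite (rcosets\<^bsub>G\<lparr>carrier := H\<rparr>\<^esub> K)"
    using card_rcosets_eq_card_image[OF K rcos_pair_eq_iff] finite_rcosets_iff_finite_image[OF K rcos_pair_eq_iff]
      rcos_pair_image
    by (simp_all add: card_cartesian_product finite_cartesian_product_iff)
qed

end

lemma card_rcosets_carrier: "card (rcosets (carrier G)) = 1"
proof -
  have "card (rcosets (carrier G)) = card ((\<lambda>_. ()) ` carrier G)"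
    by (rule card_rcosets_eq_card_image[OF subgroup_self]) simp
  also have "(\<lambda>_. ()) ` carrier G = {()}"
    using one_closed by blast
  finally show ?thesis by simp
qed

lemma card_rcosets_pos: "fin_index G A \<Longrightarrow> card (rcosets A) > 0"
  unfolding fin_index_def by (auto simp: card_gt_0_iff rcosets_eq_image)

lemma fin_index_subgroup: "fin_index G A \<Longrightarrow> subgroup A G"
  by (simp add: fin_index_def)

lemma fin_index_carrier: "fin_index G (carrier G)"
  using card_rcosets_carrier subgroup_self card_ge_0_finite[of "rcosets (carrier G)"]
  by (simp add: fin_index_def)

lemma fin_index_Int:
  assumes "fin_index G A" "fin_index G B"
  shows "fin_index G (A \<inter> B)"
proof -
  have A: "subgroup A G" and B: "subgroup B G" and "finite (rcosets A)" "finite (rcosets B)"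
    using assms by (auto simp: fin_index_def)
  have AB: "subgroup (A \<inter> B) G" using A B by (rule subgroups_Inter_pair)
  define F where "F x = (A #> x, B #> x)" for x
  have fibres: "x \<otimes> inv y \<in> A \<inter> B \<longleftrightarrow> F x = F y" if "x \<in> carrier G" "y \<in> carrier G" for x y
    using rcos_eq_rcos_iff[OF A that] rcos_eq_rcos_iff[OF B that] by (auto simp: F_def)
  have "F ` carrier G \<subseteq> (rcosets A) \<times> (rcosets B)" by (auto simp: F_def rcosets_eq_image)
  then have "finite (F ` carrier G)" using \<open>finite (rcosets A)\<close> \<open>finite (rcosets B)\<close>
    by (meson finite_SigmaI finite_subset)
  then show ?thesis using finite_rcosets_iff_finite_image[OF AB fibres] AB
    by (simp add: fin_index_def)
qed

end

section \<open>Isomorphisms between finite-index subgroups\<close>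

lemma partial_isos_iff:
  "(A, f) \<in> partial_isos G \<longleftrightarrow> fin_index G A \<and> fin_index G (f ` A) \<and> inj_on f A \<and>
     (\<forall>x\<in>A. \<forall>y\<in>A. f (x \<otimes>\<^bsub>G\<^esub> y) = f x \<otimes>\<^bsub>G\<^esub> f y)"
  by (auto simp: partial_isos_def iso_def hom_def bij_betw_def)

context group begin

lemma
  assumes A: "subgroup A G" and inj: "inj_on f A"
    and hom: "\<forall>x\<in>A. \<forall>y\<in>A. f (x \<otimes> y) = f x \<otimes> f y"
    and L: "L \<subseteq> A"
  shows card_rcosets_image:
      "card (rcosets\<^bsub>G\<lparr>carrier := f ` A\<rparr>\<^esub> (f ` L)) = card (rcosets\<^bsub>G\<lparr>carrier := A\<rparr>\<^esub> L)"
    and finite_rcosets_image: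
      "finite (rcosets\<^bsub>G\<lparr>carrier := f ` A\<rparr>\<^esub> (f ` L)) \<longleftrightarrow> finite (rcosets\<^bsub>G\<lparr>carrier := A\<rparr>\<^esub> L)"
proof -
  have rcos: "M #> b = (\<lambda>h. h \<otimes> b) ` M" for M b unfolding r_coset_def by auto
  have image_rcos: "f ` (L #> a) = (f ` L) #> f a" if "a \<in> A" for a
  proof -
    have "f ` (L #> a) = (\<lambda>h. f (h \<otimes> a)) ` L" unfolding rcos image_image ..
    also have "\<dots> = (\<lambda>h. f h \<otimes> f a) ` L"
      by (rule image_cong) (use that L hom in auto)
    finally show ?thesis unfolding rcos image_image .
  qed
  have rcos_sub: "L #> a \<subseteq> A" if "a \<in> A" for a
    unfolding rcos using that L subgroup.m_closed[OF A] by auto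
  have eq: "rcosets\<^bsub>G\<lparr>carrier := f ` A\<rparr>\<^esub> (f ` L) = image f ` (rcosets\<^bsub>G\<lparr>carrier := A\<rparr>\<^esub> L)"
    unfolding rcosets_subgroup_eq_image image_image using image_rcos by auto
  have "inj_on (image f) (rcosets\<^bsub>G\<lparr>carrier := A\<rparr>\<^esub> L)"
    by (rule inj_on_subset[OF inj_on_image_Pow[OF inj]])
      (use rcos_sub in \<open>auto simp: rcosets_subgroup_eq_image\<close>)
  then show "card (rcosets\<^bsub>G\<lparr>carrier := f ` A\<rparr>\<^esub> (f ` L)) = card (rcosets\<^bsub>G\<lparr>carrier := A\<rparr>\<^esub> L)"
    "finite (rcosets\<^bsub>G\<lparr>carrier := f ` A\<rparr>\<^esub> (f ` L)) \<longleftrightarrow> finite (rcosets\<^bsub>G\<lparr>carrier := A\<rparr>\<^esub> L)"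
    unfolding eq by (simp_all add: card_image finite_image_iff)
qed

lemma partial_iso_group_hom:
  assumes "(A, f) \<in> partial_isos G"
  shows "group_hom (G\<lparr>carrier := A\<rparr>) G f"
proof -
  have "subgroup A G" "f ` A \<subseteq> carrier G" "\<forall>x\<in>A. \<forall>y\<in>A. f (x \<otimes> y) = f x \<otimes> f y"
    using assms subgroup.subset by (auto simp: partial_isos_iff fin_index_def)
  then show ?thesis
    unfolding group_hom_def group_hom_axioms_def
    by (auto simp: hom_def is_group intro: subgroup.subgroup_is_group)
qed

lemma fin_index_image:
  assumes x: "(A, f) \<in> partial_isos G" and L: "fin_index G L" "L \<subseteq> A"
  shows "fin_index G (f ` L)"
proof -
  have A: "fin_index G A" and fA: "fin_index G (f ` A)" and inj: "inj_on f A"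
    and hom: "\<forall>x\<in>A. \<forall>y\<in>A. f (x \<otimes> y) = f x \<otimes> f y"
    using x by (auto simp: partial_isos_iff)
  have As: "subgroup A G" and Ls: "subgroup L G" and fAs: "subgroup (f ` A) G"
    using A L fA by (auto simp: fin_index_def)
  have fLs: "subgroup (f ` L) G"
    using group_hom.subgroup_img_is_subgroup[OF partial_iso_group_hom[OF x] subgroup_incl[OF Ls As L(2)]] .
  have "finite (rcosets\<^bsub>G\<lparr>carrier := A\<rparr>\<^esub> L)"
    using finite_rcosets_mult[OF As Ls L(2)] L(1) by (simp add: fin_index_def)
  then have "finite (rcosets\<^bsub>G\<lparr>carrier := f ` A\<rparr>\<^esub> (f ` L))"
    using finite_rcosets_image[OF As inj hom L(2)] by simp
  then have "finite (rcosets (f ` L))"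
    using finite_rcosets_mult[OF fAs fLs image_mono[OF L(2)]] fA by (simp add: fin_index_def)
  then show ?thesis using fLs by (simp add: fin_index_def)
qed

lemma partial_iso_inv_into:
  assumes x: "(A, f) \<in> partial_isos G"
  shows "(f ` A, inv_into A f) \<in> partial_isos G"
proof -
  have A: "fin_index G A" and fA: "fin_index G (f ` A)" and inj: "inj_on f A"
    and hom: "\<forall>x\<in>A. \<forall>y\<in>A. f (x \<otimes> y) = f x \<otimes> f y"
    using x by (auto simp: partial_isos_iff)
  have As: "subgroup A G" using A by (simp add: fin_index_def)
  have "inv_into A f (u \<otimes> v) = inv_into A f u \<otimes> inv_into A f v" if "u \<in> f ` A" "v \<in> f ` A" for u v
  proof -
    from that obtain a b where ab: "a \<in> A" "b \<in> A" "u = f a" "v = f b" by auto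
    then have "u \<otimes> v = f (a \<otimes> b)" using hom by simp
    then show ?thesis
      using inv_into_f_f[OF inj] subgroup.m_closed[OF As ab(1,2)] ab by simp
  qed
  moreover have "inv_into A f ` f ` A = A" using inv_into_image_cancel[OF inj] by simp
  ultimately show ?thesis
    using A fA by (simp add: partial_isos_iff inj_on_inv_into)
qed

lemma fin_index_preimage:
  assumes x: "(A, f) \<in> partial_isos G" and M: "fin_index G M"
  shows "fin_index G {a \<in> A. f a \<in> M}"
proof -
  have fA: "fin_index G (f ` A)" and inj: "inj_on f A" using x by (auto simp: partial_isos_iff)
  have "{a \<in> A. f a \<in> M} = inv_into A f ` (f ` A \<inter> M)"
    using inv_into_f_f[OF inj] by (auto intro!: image_eqI)
  also have "fin_index G \<dots>"
    by (rule fin_index_image[OF partial_iso_inv_into[OF x] fin_index_Int[OF fA M]]) auto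
  finally show ?thesis .
qed

lemma partial_iso_restrict:
  assumes x: "(A, f) \<in> partial_isos G" and L: "fin_index G L" "L \<subseteq> A"
  shows "(L, f) \<in> partial_isos G"
  using x L fin_index_image[OF x L] inj_on_subset[of f A L]
  by (auto simp: partial_isos_iff)

lemma partial_iso_pcomp:
  assumes "u \<in> partial_isos G" "v \<in> partial_isos G"
  shows "pcomp u v \<in> partial_isos G"
proof -
  obtain A f B g where uv: "u = (A, f)" "v = (B, g)" by fastforce
  have x: "(A, f) \<in> partial_isos G" and y: "(B, g) \<in> partial_isos G" using assms uv by simp_all
  define D where "D = {a \<in> A. f a \<in> B}"
  have B: "fin_index G B" using y by (simp add: partial_isos_iff)
  have D: "fin_index G D" unfolding D_def by (rule fin_index_preimage[OF x B])
  have "(D, f) \<in> partial_isos G" by (rule partial_iso_restrict[OF x D]) (auto simp: D_def)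
  moreover have fD: "fin_index G (f ` D)" by (rule fin_index_image[OF x D]) (auto simp: D_def)
  moreover have "(f ` D, g) \<in> partial_isos G" by (rule partial_iso_restrict[OF y fD]) (auto simp: D_def)
  ultimately have "(D, g \<circ> f) \<in> partial_isos G"
    by (auto simp: partial_isos_iff image_comp intro: comp_inj_on)
  then show ?thesis by (simp add: pcomp_def D_def uv)
qed

end

section \<open>The abstract commensurator is a group\<close>

lemma pcomp_assoc: "pcomp (pcomp x y) z = pcomp x (pcomp y z)"
  by (auto simp: pcomp_def)

lemma carrier_Comm: "carrier (Comm G) = partial_isos G // comm_equiv G"
  and mult_Comm: "U \<otimes>\<^bsub>Comm G\<^esub> V = comm_mult G U V"
  and one_Comm: "\<one>\<^bsub>Comm G\<^esub> = comm_equiv G `` {(carrier G, id)}"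
  by (simp_all add: Comm_def)

context group begin

lemma equiv_comm_equiv: "equiv (partial_isos G) (comm_equiv G)"
proof (rule equivI)
  show "comm_equiv G \<subseteq> partial_isos G \<times> partial_isos G"
    by (auto simp: comm_equiv_def)
  show "refl_on (partial_isos G) (comm_equiv G)"
    by (rule refl_onI) (auto simp: comm_equiv_def partial_isos_def)
  show "sym (comm_equiv G)"
    by (rule symI) (auto simp: comm_equiv_def)
  show "trans (comm_equiv G)"
  proof (rule transI)
    fix x y z assume "(x, y) \<in> comm_equiv G" "(y, z) \<in> comm_equiv G"
    then obtain K1 K2 where "x \<in> partial_isos G" "z \<in> partial_isos G"
      "fin_index G K1" "K1 \<subseteq> fst x" "\<forall>k\<in>K1. snd x k = snd y k"
      "fin_index G K2" "K2 \<subseteq> fst z" "\<forall>k\<in>K2. snd y k = snd z k"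
      by (auto simp: comm_equiv_def)
    then show "(x, z) \<in> comm_equiv G"
      using fin_index_Int[of K1 K2] by (auto simp: comm_equiv_def intro!: exI[of _ "K1 \<inter> K2"])
  qed
qed

lemma pcomp_comm_equiv:
  assumes "((A, f), (A', f')) \<in> comm_equiv G" and "((B, g), (B', g')) \<in> comm_equiv G"
  shows "(pcomp (A, f) (B, g), pcomp (A', f') (B', g')) \<in> comm_equiv G"
proof -
  obtain K1 where K1: "(A, f) \<in> partial_isos G" "(A', f') \<in> partial_isos G"
    "fin_index G K1" "K1 \<subseteq> A" "K1 \<subseteq> A'" "\<forall>k\<in>K1. f k = f' k"
    using assms(1) by (auto simp: comm_equiv_def)
  obtain K2 where K2: "(B, g) \<in> partial_isos G" "(B', g') \<in> partial_isos G"
    "fin_index G K2" "K2 \<subseteq> B" "K2 \<subseteq> B'" "\<forall>k\<in>K2. g k = g' k"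
    using assms(2) by (auto simp: comm_equiv_def)
  have "fin_index G (K1 \<inter> {a \<in> A. f a \<in> K2})"
    by (rule fin_index_Int[OF K1(3) fin_index_preimage[OF K1(1) K2(3)]])
  then show ?thesis
    using K1 K2 partial_iso_pcomp[OF K1(1) K2(1)] partial_iso_pcomp[OF K1(2) K2(2)]
    unfolding comm_equiv_def pcomp_def
    by (auto intro!: exI[of _ "K1 \<inter> {a \<in> A. f a \<in> K2}"])
qed

lemma partial_iso_id: "(carrier G, id) \<in> partial_isos G"
  using fin_index_carrier by (simp add: partial_isos_iff)

lemma pcomp_id_left: "(A, f) \<in> partial_isos G \<Longrightarrow> pcomp (carrier G, id) (A, f) = (A, f)"
  using subgroup.subset by (auto simp: pcomp_def partial_isos_iff fin_index_def)

lemma pcomp_inv_into_comm_equiv: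
  assumes x: "(A, f) \<in> partial_isos G"
  shows "(pcomp (f ` A, inv_into A f) (A, f), (carrier G, id)) \<in> comm_equiv G"
proof -
  have fA: "fin_index G (f ` A)" using x by (simp add: partial_isos_iff)
  have "f ` A \<subseteq> fst (pcomp (f ` A, inv_into A f) (A, f))"
    by (auto simp: pcomp_def intro: inv_into_into)
  moreover have "\<forall>k\<in>f ` A. snd (pcomp (f ` A, inv_into A f) (A, f)) k = k"
    by (auto simp: pcomp_def f_inv_into_f)
  ultimately show ?thesis
    using partial_iso_pcomp[OF partial_iso_inv_into[OF x] x] partial_iso_id fA
      subgroup.subset[OF fin_index_subgroup[OF fA]]
    unfolding comm_equiv_def by auto
qed

lemma comm_equiv_class_eq:
  assumes "U \<in> partial_isos G // comm_equiv G" and "u \<in> U"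
  shows "U = comm_equiv G `` {u}" and "u \<in> partial_isos G"
proof -
  obtain x where x: "U = comm_equiv G `` {x}" "x \<in> partial_isos G"
    using assms(1) by (rule quotientE)
  then have "(x, u) \<in> comm_equiv G" using assms(2) by simp
  then show "U = comm_equiv G `` {u}" "u \<in> partial_isos G"
    using x equiv_class_eq[OF equiv_comm_equiv] by (auto simp: comm_equiv_def)
qed

lemma some_in_comm_equiv_class:
  "U \<in> partial_isos G // comm_equiv G \<Longrightarrow> (SOME u. u \<in> U) \<in> U"
  using in_quotient_imp_non_empty[OF equiv_comm_equiv] by (simp add: some_in_eq)

lemma comm_mult_eq_class:
  assumes U: "U \<in> partial_isos G // comm_equiv G" and V: "V \<in> partial_isos G // comm_equiv G"
    and "u \<in> U" "v \<in> V"
  shows "comm_mult G U V = comm_equiv G `` {pcomp u v}"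
proof -
  have "(SOME u. u \<in> U, u) \<in> comm_equiv G" "(SOME v. v \<in> V, v) \<in> comm_equiv G"
    using comm_equiv_class_eq(1)[OF U some_in_comm_equiv_class[OF U]]
      comm_equiv_class_eq(1)[OF V some_in_comm_equiv_class[OF V]] assms(3,4)
    by auto
  then have "(pcomp (SOME u. u \<in> U) (SOME v. v \<in> V), pcomp u v) \<in> comm_equiv G"
    using pcomp_comm_equiv by (metis prod.collapse)
  then show ?thesis
    unfolding comm_mult_def by (rule equiv_class_eq[OF equiv_comm_equiv])
qed

lemma comm_mult_closed:
  assumes U: "U \<in> partial_isos G // comm_equiv G" and V: "V \<in> partial_isos G // comm_equiv G"
    and "u \<in> U" "v \<in> V"
  shows "comm_mult G U V \<in> partial_isos G // comm_equiv G"
    and "pcomp u v \<in> comm_mult G U V"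
  using partial_iso_pcomp[OF comm_equiv_class_eq(2)[OF U \<open>u \<in> U\<close>] comm_equiv_class_eq(2)[OF V \<open>v \<in> V\<close>]]
    equiv_class_self[OF equiv_comm_equiv]
  unfolding comm_mult_eq_class[OF assms] by (auto intro: quotientI)

lemma group_Comm: "group (Comm G)"
proof (rule groupI, unfold carrier_Comm mult_Comm one_Comm)
  have one: "comm_equiv G `` {(carrier G, id)} \<in> partial_isos G // comm_equiv G"
    using partial_iso_id by (rule quotientI)
  then show "comm_equiv G `` {(carrier G, id)} \<in> partial_isos G // comm_equiv G" .
  fix U V W
  assume U: "U \<in> partial_isos G // comm_equiv G" and V: "V \<in> partial_isos G // comm_equiv G"
    and W: "W \<in> partial_isos G // comm_equiv G"
  obtain u v w where uvw: "u \<in> U" "v \<in> V" "w \<in> W"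
    using some_in_comm_equiv_class U V W by blast
  show "comm_mult G U V \<in> partial_isos G // comm_equiv G"
    using comm_mult_closed(1)[OF U V uvw(1,2)] .
  show "comm_mult G (comm_mult G U V) W = comm_mult G U (comm_mult G V W)"
    using comm_mult_eq_class[OF comm_mult_closed(1)[OF U V uvw(1,2)] W
        comm_mult_closed(2)[OF U V uvw(1,2)] uvw(3)]
      comm_mult_eq_class[OF U comm_mult_closed(1)[OF V W uvw(2,3)] uvw(1) comm_mult_closed(2)[OF V W uvw(2,3)]]
    by (simp add: pcomp_assoc)
  obtain A f where u: "u = (A, f)" and Af: "(A, f) \<in> partial_isos G"
    using comm_equiv_class_eq(2)[OF U uvw(1)] by (cases u) auto
  show "comm_mult G (comm_equiv G `` {(carrier G, id)}) U = U"
    using comm_mult_eq_class[OF one U equiv_class_self[OF equiv_comm_equiv partial_iso_id] uvw(1)]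
      comm_equiv_class_eq(1)[OF U uvw(1)] pcomp_id_left[OF Af] u
    by simp
  have inv_class: "comm_equiv G `` {(f ` A, inv_into A f)} \<in> partial_isos G // comm_equiv G"
    using partial_iso_inv_into[OF Af] by (rule quotientI)
  have "comm_mult G (comm_equiv G `` {(f ` A, inv_into A f)}) U = comm_equiv G `` {(carrier G, id)}"
    using comm_mult_eq_class[OF inv_class U equiv_class_self[OF equiv_comm_equiv partial_iso_inv_into[OF Af]] uvw(1)]
      equiv_class_eq[OF equiv_comm_equiv pcomp_inv_into_comm_equiv[OF Af]] u
    by simp
  with inv_class show "\<exists>Y\<in>partial_isos G // comm_equiv G. comm_mult G Y U = comm_equiv G `` {(carrier G, id)}"
    by blast
qed

end

section \<open>The index valuations\<close>

definition index_val :: "('a, 'b) monoid_scheme \<Rightarrow> nat \<Rightarrow> 'a set \<times> ('a \<Rightarrow> 'a) \<Rightarrow> int" where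
  "index_val G p x = int (multiplicity p (card (rcosets\<^bsub>G\<^esub> (fst x)))) -
     int (multiplicity p (card (rcosets\<^bsub>G\<^esub> (snd x ` fst x))))"

definition comm_index_val :: "('a, 'b) monoid_scheme \<Rightarrow> nat \<Rightarrow> ('a set \<times> ('a \<Rightarrow> 'a)) set \<Rightarrow> int" where
  "comm_index_val G p U = index_val G p (SOME u. u \<in> U)"

context group begin

lemma index_val_restrict:
  assumes p: "Factorial_Ring.prime p" and x: "(A, f) \<in> partial_isos G" and L: "fin_index G L" "L \<subseteq> A"
  shows "index_val G p (L, f) = index_val G p (A, f)"
proof -
  have A: "fin_index G A" and fA: "fin_index G (f ` A)" and inj: "inj_on f A"
    and hom: "\<forall>x\<in>A. \<forall>y\<in>A. f (x \<otimes> y) = f x \<otimes> f y"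
    using x by (auto simp: partial_isos_iff)
  have fL: "fin_index G (f ` L)" by (rule fin_index_image[OF x L])
  have As: "subgroup A G" and Ls: "subgroup L G" and fAs: "subgroup (f ` A) G"
    and fLs: "subgroup (f ` L) G"
    using A L fA fL by (auto simp: fin_index_def)
  define r where "r = card (rcosets\<^bsub>G\<lparr>carrier := A\<rparr>\<^esub> L)"
  have L_index: "card (rcosets L) = card (rcosets A) * r"
    unfolding r_def by (rule card_rcosets_mult[OF As Ls L(2)])
  have fL_index: "card (rcosets (f ` L)) = card (rcosets (f ` A)) * r"
    unfolding r_def card_rcosets_mult[OF fAs fLs image_mono[OF L(2)]] card_rcosets_image[OF As inj hom L(2)] ..
  have "r \<noteq> 0" using card_rcosets_pos[OF L(1)] L_index by auto
  then show ?thesis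
    using L_index fL_index card_rcosets_pos[OF A] card_rcosets_pos[OF fA] p
    by (simp add: index_val_def prime_elem_multiplicity_mult_distrib)
qed

lemma index_val_comm_equiv:
  assumes p: "Factorial_Ring.prime p" and "(x, y) \<in> comm_equiv G"
  shows "index_val G p x = index_val G p y"
proof -
  obtain A f B g where xy: "x = (A, f)" "y = (B, g)" by fastforce
  obtain K where K: "(A, f) \<in> partial_isos G" "(B, g) \<in> partial_isos G"
    "fin_index G K" "K \<subseteq> A" "K \<subseteq> B" "\<forall>k\<in>K. f k = g k"
    using assms(2) by (auto simp: comm_equiv_def xy)
  have "f ` K = g ` K" by (rule image_cong) (use K(6) in auto)
  then have "index_val G p (K, f) = index_val G p (K, g)" by (simp add: index_val_def)
  then show ?thesis
    using index_val_restrict[OF p K(1) K(3,4)] index_val_restrict[OF p K(2) K(3,5)] xy by simp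
qed

lemma index_val_pcomp:
  assumes p: "Factorial_Ring.prime p" and x: "(A, f) \<in> partial_isos G" and y: "(B, g) \<in> partial_isos G"
  shows "index_val G p (pcomp (A, f) (B, g)) = index_val G p (A, f) + index_val G p (B, g)"
proof -
  define D where "D = {a \<in> A. f a \<in> B}"
  have D: "fin_index G D"
    unfolding D_def using y by (auto simp: partial_isos_iff intro: fin_index_preimage[OF x])
  have fD: "fin_index G (f ` D)" by (rule fin_index_image[OF x D]) (auto simp: D_def)
  have "index_val G p (D, f) = index_val G p (A, f)"
    by (rule index_val_restrict[OF p x D]) (auto simp: D_def)
  moreover have "index_val G p (f ` D, g) = index_val G p (B, g)"
    by (rule index_val_restrict[OF p y fD]) (auto simp: D_def)
  ultimately show ?thesis by (simp add: index_val_def pcomp_def D_def image_comp)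
qed

lemma comm_index_val_eq:
  assumes p: "Factorial_Ring.prime p" and U: "U \<in> partial_isos G // comm_equiv G" and "u \<in> U"
  shows "comm_index_val G p U = index_val G p u"
proof -
  have "(SOME u. u \<in> U, u) \<in> comm_equiv G"
    using comm_equiv_class_eq(1)[OF U some_in_comm_equiv_class[OF U]] assms(3) by blast
  then show ?thesis unfolding comm_index_val_def by (rule index_val_comm_equiv[OF p])
qed

lemma hom_comm_index_val:
  assumes p: "Factorial_Ring.prime p"
  shows "comm_index_val G p \<in> hom (Comm G) integer_group"
proof (rule homI)
  fix U V assume U: "U \<in> carrier (Comm G)" and V: "V \<in> carrier (Comm G)"
  obtain u v where uv: "u \<in> U" "v \<in> V"
    using some_in_comm_equiv_class U V unfolding carrier_Comm by blast
  obtain A f B g where u: "u = (A, f)" and v: "v = (B, g)" by fastforce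
  have "(A, f) \<in> partial_isos G" "(B, g) \<in> partial_isos G"
    using comm_equiv_class_eq(2) U V uv u v by (auto simp: carrier_Comm)
  then show "comm_index_val G p (U \<otimes>\<^bsub>Comm G\<^esub> V) =
      comm_index_val G p U \<otimes>\<^bsub>integer_group\<^esub> comm_index_val G p V"
    using U V uv comm_mult_closed[of U V u v] u v
    by (simp add: carrier_Comm mult_Comm comm_index_val_eq[OF p] index_val_pcomp[OF p])
qed simp

end

lemma (in group) generate_subset_kernel:
  assumes "group H" "h \<in> hom G H" "S \<subseteq> carrier G" "\<And>s. s \<in> S \<Longrightarrow> h s = \<one>\<^bsub>H\<^esub>"
  shows "generate G S \<subseteq> kernel G H h"
proof (rule generate_subgroup_incl)
  show "S \<subseteq> kernel G H h" using assms(3,4) by (auto simp: kernel_def)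
  show "subgroup (kernel G H h) G"
    using assms(1,2) by (intro group_hom.subgroup_kernel) (simp add: group_hom_def group_hom_axioms_def is_group)
qed

lemma (in group) comm_index_val_eq_0:
  assumes p: "Factorial_Ring.prime p" and U: "U \<in> carrier (Comm G)" and "(A, f) \<in> U"
    and "\<not> p dvd card (rcosets A)" "\<not> p dvd card (rcosets (f ` A))"
  shows "comm_index_val G p U = 0"
  using comm_index_val_eq[OF p U[unfolded carrier_Comm] assms(3)] assms(4,5)
  by (simp add: index_val_def not_dvd_imp_multiplicity_0)

lemma (in group) finitely_generated_Comm_imp_index_vals_vanish:
  assumes "finitely_generated (Comm G)"
  obtains N where "finite N"
    and "\<And>p U. Factorial_Ring.prime p \<Longrightarrow> p \<notin> N \<Longrightarrow> U \<in> carrier (Comm G) \<Longrightarrow> comm_index_val G p U = 0"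
proof -
  interpret C: group "Comm G" by (rule group_Comm)
  obtain S where S: "finite S" "S \<subseteq> carrier (Comm G)" "generate (Comm G) S = carrier (Comm G)"
    using assms unfolding finitely_generated_def by blast
  have some_in: "(SOME u. u \<in> s) \<in> s \<and> (SOME u. u \<in> s) \<in> partial_isos G" if "s \<in> S" for s
    using that S(2) some_in_comm_equiv_class comm_equiv_class_eq(2) unfolding carrier_Comm by blast
  define A :: "('a set \<times> ('a \<Rightarrow> 'a)) set \<Rightarrow> 'a set" where "A s = fst (SOME u. u \<in> s)" for s
  define f :: "('a set \<times> ('a \<Rightarrow> 'a)) set \<Rightarrow> 'a \<Rightarrow> 'a" where "f s = snd (SOME u. u \<in> s)" for s
  have Af: "(A s, f s) \<in> s \<and> (A s, f s) \<in> partial_isos G" if "s \<in> S" for s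
    using some_in[OF that] by (simp add: A_def f_def)
  define N where "N = (\<Union>s\<in>S. prime_factors (card (rcosets (A s)) * card (rcosets (f s ` A s))))"
  have "finite N" unfolding N_def using S(1) by simp
  moreover have "comm_index_val G p U = 0"
    if p: "Factorial_Ring.prime p" "p \<notin> N" and U: "U \<in> carrier (Comm G)" for p U
  proof -
    have "comm_index_val G p s = 0" if s: "s \<in> S" for s
    proof (rule comm_index_val_eq_0[OF p(1)])
      have "card (rcosets (A s)) > 0" "card (rcosets (f s ` A s)) > 0"
        using Af[OF s] by (auto simp: partial_isos_iff card_rcosets_pos)
      moreover have "p \<notin> prime_factors (card (rcosets (A s)) * card (rcosets (f s ` A s)))"
        using p(2) s unfolding N_def by blast
      ultimately show "\<not> p dvd card (rcosets (A s))" "\<not> p dvd card (rcosets (f s ` A s))"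
        using p(1) by (auto simp: in_prime_factors_iff)
    qed (use s S(2) Af in auto)
    then have "carrier (Comm G) \<subseteq> kernel (Comm G) integer_group (comm_index_val G p)"
      using C.generate_subset_kernel[OF _ hom_comm_index_val[OF p(1)] S(2)] S(3) by simp
    then show ?thesis using U by (auto simp: kernel_def)
  qed
  ultimately show ?thesis by (rule that)
qed

lemma (in group) index_val_iso_prime_index:
  assumes p: "Factorial_Ring.prime p" and H: "subgroup H G" "card (rcosets H) = p"
    and "G\<lparr>carrier := H\<rparr> \<cong> G"
  obtains U where "U \<in> carrier (Comm G)" and "comm_index_val G p U = 1"
proof -
  obtain \<phi> where \<phi>: "\<phi> \<in> iso (G\<lparr>carrier := H\<rparr>) G" using assms(4) unfolding is_iso_def by blast
  then have "inj_on \<phi> H" "\<phi> ` H = carrier G"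
    and "\<forall>x\<in>H. \<forall>y\<in>H. \<phi> (x \<otimes> y) = \<phi> x \<otimes> \<phi> y"
    by (simp_all add: iso_def bij_betw_def hom_def)
  moreover have "fin_index G H"
    using H card.infinite[of "rcosets H"] not_prime_0 p unfolding fin_index_def by metis
  ultimately have \<phi>_partial: "(H, \<phi>) \<in> partial_isos G"
    using fin_index_carrier by (simp add: partial_isos_iff)
  define U where "U = comm_equiv G `` {(H, \<phi>)}"
  have "U \<in> carrier (Comm G)" unfolding U_def carrier_Comm using \<phi>_partial by (rule quotientI)
  have "comm_index_val G p U = index_val G p (H, \<phi>)"
    unfolding U_def
    by (rule comm_index_val_eq[OF p quotientI[OF \<phi>_partial] equiv_class_self[OF equiv_comm_equiv \<phi>_partial]])
  also have "\<dots> = 1"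
    using H(2) \<open>\<phi> ` H = carrier G\<close> card_rcosets_carrier multiplicity_self[of p] p
    by (simp add: index_val_def)
  finally show ?thesis using \<open>U \<in> carrier (Comm G)\<close> by (rule that[rotated])
qed

theorem proposition2p8:
  fixes G :: "('a, 'b) monoid_scheme"
  assumes "group G"
    and "unique_root G"
    and "infinite {p::nat. Factorial_Ring.prime p \<and> (\<exists>H. subgroup H G \<and> card (rcosets\<^bsub>G\<^esub> H) = p \<and>
                     G\<lparr>carrier := H\<rparr> \<cong> G)}"
  shows "\<not> finitely_generated (Comm G)"
proof
  interpret group G by fact
  assume "finitely_generated (Comm G)"
  then obtain N where N: "finite N"
    and vanish: "\<And>p U. Factorial_Ring.prime p \<Longrightarrow> p \<notin> N \<Longrightarrow> U \<in> carrier (Comm G) \<Longrightarrow> comm_index_val G p U = 0"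
    using finitely_generated_Comm_imp_index_vals_vanish by blast
  obtain p where "p \<notin> N" and p: "Factorial_Ring.prime p"
    and "\<exists>H. subgroup H G \<and> card (rcosets\<^bsub>G\<^esub> H) = p \<and> G\<lparr>carrier := H\<rparr> \<cong> G"
    using infinite_imp_nonempty[OF Diff_infinite_finite[OF N assms(3)]] by blast
  then obtain U where "U \<in> carrier (Comm G)" "comm_index_val G p U = 1"
    using index_val_iso_prime_index by blast
  with vanish[OF p \<open>p \<notin> N\<close>] show False by simp
qed

end
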